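(* Let $G,\alpha,\beta,a,b$ be as in the setting below (so $(A_1)$, $(A_2)$ hold and $\Omega_a=\{a=0\}$, $\Omega_b=\{b=0\}$). For each $\lambda>0$ let $(u_\lambda,v_\lambda)\in H_\lambda$ be a ground state solution of system (S$_\lambda$) (a weak solution lying in $\mathcal N_\lambda$ with $J_\lambda(u_\lambda,v_\lambda)=c_{\mathcal N_\lambda}$). Then for any sequence $\lambda_n\to\infty$ there is a subsequence along which $(u_{\lambda_n},v_{\lambda_n})$ converges strongly in $H$ to some $(u,v)$ with $u\equiv0$ outside $\Omega_a$, $v\equiv0$ outside $\Omega_b$, $(u,v)\in H_\Omega$, and $(u,v)$ is a ground state solution of the Dirichlet system (D) (a weak solution lying in $\mathcal N_\Omega$ with $J_\Omega(u,v)=c_{\mathcal N_\Omega}$).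
   Context: $G=(V,E)$ locally finite connected graph, $w_{xy}=w_{yx}>0$, measure $\mu\ge\mu_{\min}>0$; $\Delta u(x)=\frac1{\mu(x)}\sum_{y\sim x}w_{xy}(u(y)-u(x))$, $\Gamma(u,v)(x)=\frac1{2\mu(x)}\sum_{y\sim x}w_{xy}(u(y)-u(x))(v(y)-v(x))$, $|\nabla u|^2=\Gamma(u,u)$, $\int_Af\,d\mu=\sum_{x\in A}\mu(x)f(x)$. $\alpha,\beta>1$. $(A_1)$: $a,b:V\to\mathbb{R}$, $a,b\ge0$, and $\Omega_a=\{a=0\}$, $\Omega_b=\{b=0\}$, $\Omega_a\cap\Omega_b$ are non-empty bounded domains (uniformly bounded graph distance). $(A_2)$: for some $x_0$, $a(x),b(x)\to+\infty$ as $d(x,x_0)\to\infty$. $H=W^{1,2}(V)^2$ with $\|(u,v)\|_H^2=\int_V(|\nabla u|^2+|\nabla v|^2+u^2+v^2)d\mu$. $H_\lambda=\{(u,v)\in H:\int_V(\lambda au^2+\lambda bv^2)d\mu<\infty\}$, $\|(u,v)\|_{H_\lambda}^2=\int_V(|\nabla u|^2+|\nabla v|^2+(\lambda a+1)u^2+(\lambda b+1)v^2)d\mu$, $J_\lambda(u,v)=\frac12\|(u,v)\|_{H_\lambda}^2-\frac1{\alpha+\beta}\int_V|u|^\alpha|v|^\beta d\mu$; (S$_\lambda$): $-\Delta u+(\lambda a+1)u=\frac{\alpha}{\alpha+\beta}|u|^{\alpha-2}u|v|^\beta$, $-\Delta v+(\lambda b+1)v=\frac{\beta}{\alpha+\beta}|u|^\alpha|v|^{\beta-2}v$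 on $V$, weak solutions being critical points of $J_\lambda$ on $H_\lambda$; $\mathcal N_\lambda=\{(u,v)\ne0:\langle J_\lambda'(u,v),(u,v)\rangle=0\}$, $c_{\mathcal N_\lambda}=\inf_{\mathcal N_\lambda}J_\lambda$. For $\Omega\subset V$: $\partial\Omega=\{y\notin\Omega:\exists x\in\Omega, xy\in E\}$, $\overline\Omega=\Omega\cup\partial\Omega$; $W_0^{1,2}(\Omega)$ = completion of functions supported in $\Omega$ under $(\int_{\overline\Omega}|\nabla u|^2+\int_\Omega u^2)^{1/2}$. $H_\Omega=W_0^{1,2}(\Omega_a)\times W_0^{1,2}(\Omega_b)$, $J_\Omega(u,v)=\frac12\int_{\overline\Omega_a\cup\overline\Omega_b}(|\nabla u|^2+|\nabla v|^2)d\mu+\frac12\int_{\Omega_a\cup\Omega_b}(u^2+v^2)d\mu-\frac1{\alpha+\beta}\int_{\Omega_a\cup\Omega_b}|u|^\alpha|v|^\beta d\mu$; (D): $-\Delta u+u=\frac{\alpha}{\alpha+\beta}|u|^{\alpha-2}u|v|^\beta$ in $\Omega_a$, $-\Delta v+v=\frac{\beta}{\alpha+\beta}|u|^\alpha|v|^{\beta-2}v$ in $\Omega_b$, $u=0$ on $\partial\Omega_a$, $v=0$ on $\partial\Omega_b$, weak solutions being critical points of $J_\Omega$ on $H_\Omega$; $\mathcal N_\Omega$, $c_{\mathcal N_\Omega}$ defined analogously. *)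

theory Defs
  imports "HOL-Analysis.Analysis"
begin

type_synonym 'v fpair = "('v \<Rightarrow> real) \<times> ('v \<Rightarrow> real)"

definition edges :: "('v \<Rightarrow> 'v \<Rightarrow> real) \<Rightarrow> ('v \<times> 'v) set" where
  "edges w = {(x, y). 0 < w x y}"

definition graph_setting :: "('v \<Rightarrow> 'v \<Rightarrow> real) \<Rightarrow> ('v \<Rightarrow> real) \<Rightarrow> bool" where
  "graph_setting w \<mu> \<longleftrightarrow>
     (\<forall>x y. w x y = w y x) \<and> (\<forall>x y. 0 \<le> w x y) \<and>
     (\<forall>x. finite {y. 0 < w x y}) \<and>
     (\<forall>x y. (x, y) \<in> (edges w)\<^sup>*) \<and>
     (\<exists>\<mu>min > 0. \<forall>x. \<mu>min \<le> \<mu> x)"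

definition gdist :: "('v \<Rightarrow> 'v \<Rightarrow> real) \<Rightarrow> 'v \<Rightarrow> 'v \<Rightarrow> nat" where
  "gdist w x y = (LEAST n. (x, y) \<in> (edges w) ^^ n)"

definition gbounded :: "('v \<Rightarrow> 'v \<Rightarrow> real) \<Rightarrow> 'v set \<Rightarrow> bool" where
  "gbounded w A \<longleftrightarrow> (\<exists>R. \<forall>x\<in>A. \<forall>y\<in>A. gdist w x y \<le> R)"

definition gboundary :: "('v \<Rightarrow> 'v \<Rightarrow> real) \<Rightarrow> 'v set \<Rightarrow> 'v set" where
  "gboundary w \<Omega> = {y. y \<notin> \<Omega> \<and> (\<exists>x\<in>\<Omega>. 0 < w x y)}"

definition gclosure :: "('v \<Rightarrow> 'v \<Rightarrow> real) \<Rightarrow> 'v set \<Rightarrow> 'v set" where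
  "gclosure w \<Omega> = \<Omega> \<union> gboundary w \<Omega>"

definition Gam :: "('v \<Rightarrow> 'v \<Rightarrow> real) \<Rightarrow> ('v \<Rightarrow> real) \<Rightarrow> ('v \<Rightarrow> real) \<Rightarrow> ('v \<Rightarrow> real) \<Rightarrow> 'v \<Rightarrow> real" where
  "Gam w \<mu> u v x = (1 / (2 * \<mu> x)) * (\<Sum>y\<in>{y. 0 < w x y}. w x y * (u y - u x) * (v y - v x))"

definition grad2 :: "('v \<Rightarrow> 'v \<Rightarrow> real) \<Rightarrow> ('v \<Rightarrow> real) \<Rightarrow> ('v \<Rightarrow> real) \<Rightarrow> 'v \<Rightarrow> real" where
  "grad2 w \<mu> u x = Gam w \<mu> u u x"

definition integ :: "('v \<Rightarrow> real) \<Rightarrow> ('v \<Rightarrow> real) \<Rightarrow> real" where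
  "integ \<mu> f = infsum (\<lambda>x. \<mu> x * f x) UNIV"

definition integrable_V :: "('v \<Rightarrow> real) \<Rightarrow> ('v \<Rightarrow> real) \<Rightarrow> bool" where
  "integrable_V \<mu> f \<longleftrightarrow> (\<lambda>x. \<mu> x * f x) summable_on UNIV"

definition W12 :: "('v \<Rightarrow> 'v \<Rightarrow> real) \<Rightarrow> ('v \<Rightarrow> real) \<Rightarrow> ('v \<Rightarrow> real) set" where
  "W12 w \<mu> = {u. integrable_V \<mu> (\<lambda>x. grad2 w \<mu> u x + (u x)\<^sup>2)}"

definition Hspace :: "('v \<Rightarrow> 'v \<Rightarrow> real) \<Rightarrow> ('v \<Rightarrow> real) \<Rightarrow> 'v fpair set" where
  "Hspace w \<mu> = W12 w \<mu> \<times> W12 w \<mu>"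

definition normH :: "('v \<Rightarrow> 'v \<Rightarrow> real) \<Rightarrow> ('v \<Rightarrow> real) \<Rightarrow> 'v fpair \<Rightarrow> real" where
  "normH w \<mu> p = sqrt (integ \<mu> (\<lambda>x. grad2 w \<mu> (fst p) x + grad2 w \<mu> (snd p) x
                                   + (fst p x)\<^sup>2 + (snd p x)\<^sup>2))"

definition Hlam :: "('v \<Rightarrow> 'v \<Rightarrow> real) \<Rightarrow> ('v \<Rightarrow> real) \<Rightarrow> ('v \<Rightarrow> real) \<Rightarrow> ('v \<Rightarrow> real) \<Rightarrow> real \<Rightarrow> 'v fpair set" where
  "Hlam w \<mu> a b lam = {p \<in> Hspace w \<mu>.
      integrable_V \<mu> (\<lambda>x. lam * a x * (fst p x)\<^sup>2 + lam * b x * (snd p x)\<^sup>2)}"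

definition Jlam :: "('v \<Rightarrow> 'v \<Rightarrow> real) \<Rightarrow> ('v \<Rightarrow> real) \<Rightarrow> real \<Rightarrow> real \<Rightarrow> ('v \<Rightarrow> real) \<Rightarrow> ('v \<Rightarrow> real) \<Rightarrow> real \<Rightarrow> 'v fpair \<Rightarrow> real" where
  "Jlam w \<mu> \<alpha> \<beta> a b lam p =
     1/2 * integ \<mu> (\<lambda>x. grad2 w \<mu> (fst p) x + grad2 w \<mu> (snd p) x
                     + (lam * a x + 1) * (fst p x)\<^sup>2 + (lam * b x + 1) * (snd p x)\<^sup>2)
     - 1 / (\<alpha> + \<beta>) * integ \<mu> (\<lambda>x. \<bar>fst p x\<bar> powr \<alpha> * \<bar>snd p x\<bar> powr \<beta>)"

definition dirderiv :: "('v fpair \<Rightarrow> real) \<Rightarrow> 'v fpair \<Rightarrow> 'v fpair \<Rightarrow> real \<Rightarrow> bool" where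
  "dirderiv J p q D \<longleftrightarrow>
     ((\<lambda>t. J (\<lambda>x. fst p x + t * fst q x, \<lambda>x. snd p x + t * snd q x)) has_real_derivative D) (at 0)"

definition critical_on :: "('v fpair \<Rightarrow> real) \<Rightarrow> 'v fpair set \<Rightarrow> 'v fpair \<Rightarrow> bool" where
  "critical_on J X p \<longleftrightarrow> p \<in> X \<and> (\<forall>q\<in>X. dirderiv J p q 0)"

definition nehari :: "('v fpair \<Rightarrow> real) \<Rightarrow> 'v fpair set \<Rightarrow> 'v fpair set" where
  "nehari J X = {p \<in> X. p \<noteq> (\<lambda>_. 0, \<lambda>_. 0) \<and> dirderiv J p p 0}"

definition ground_state :: "('v fpair \<Rightarrow> real) \<Rightarrow> 'v fpair set \<Rightarrow> 'v fpair \<Rightarrow> bool" where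
  "ground_state J X p \<longleftrightarrow> critical_on J X p \<and> p \<in> nehari J X \<and>
      J p = (INF q\<in>nehari J X. J q)"

text \<open>W_0^{1,2}(Omega) for bounded (hence finite) Omega: functions supported in Omega.\<close>
definition W0 :: "'v set \<Rightarrow> ('v \<Rightarrow> real) set" where
  "W0 \<Omega> = {u. \<forall>x. x \<notin> \<Omega> \<longrightarrow> u x = 0}"

definition HOmega :: "'v set \<Rightarrow> 'v set \<Rightarrow> 'v fpair set" where
  "HOmega \<Omega>a \<Omega>b = W0 \<Omega>a \<times> W0 \<Omega>b"

definition JOmega :: "('v \<Rightarrow> 'v \<Rightarrow> real) \<Rightarrow> ('v \<Rightarrow> real) \<Rightarrow> real \<Rightarrow> real \<Rightarrow> 'v set \<Rightarrow> 'v set \<Rightarrow> 'v fpair \<Rightarrow> real" where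
  "JOmega w \<mu> \<alpha> \<beta> \<Omega>a \<Omega>b p =
     1/2 * (\<Sum>x\<in>gclosure w \<Omega>a \<union> gclosure w \<Omega>b. \<mu> x * (grad2 w \<mu> (fst p) x + grad2 w \<mu> (snd p) x))
   + 1/2 * (\<Sum>x\<in>\<Omega>a \<union> \<Omega>b. \<mu> x * ((fst p x)\<^sup>2 + (snd p x)\<^sup>2))
   - 1 / (\<alpha> + \<beta>) * (\<Sum>x\<in>\<Omega>a \<union> \<Omega>b. \<mu> x * (\<bar>fst p x\<bar> powr \<alpha> * \<bar>snd p x\<bar> powr \<beta>))"

end

theory Submission
  imports Defs
begin

text \<open>
  By (A1) the zero sets \<open>\<Omega>\<^sub>a\<close>, \<open>\<Omega>\<^sub>b\<close> are finite, so every pair in \<open>H\<^sub>\<Omega>\<close> lies in each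
  \<open>H\<^sub>\<lambda>\<close> with \<open>J\<^sub>\<lambda> = J\<^sub>\<Omega>\<close>, and derivatives in directions of \<open>H\<^sub>\<Omega>\<close> are finite sums.
  On the Nehari manifold \<open>J\<^sub>\<lambda> = \<kappa> \<parallel>\<cdot>\<parallel>\<^sup>2\<^sub>H\<^sub>\<lambda>\<close> with \<open>\<kappa> = 1/2 - 1/(\<alpha>+\<beta>) > 0\<close>, so comparing a ground
  state with a fixed element of \<open>\<N>\<^sub>\<Omega>\<close> bounds \<open>\<parallel>(u\<^sub>\<lambda>, v\<^sub>\<lambda>)\<parallel>\<^sup>2\<^sub>H\<^sub>\<lambda>\<close> uniformly. Pointwise
  this gives boundedness and \<open>\<lambda> a u\<^sub>\<lambda>\<^sup>2 \<le> C\<close>, so a subsequence converges pointwise to a pair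
  supported in \<open>\<Omega>\<^sub>a \<times> \<Omega>\<^sub>b\<close>, which is then critical for \<open>J\<^sub>\<Omega>\<close>. The limit is nonzero:
  every Nehari element has a component above \<open>1/2\<close> somewhere, and by (A2) the positive values
  of \<open>a\<close>, \<open>b\<close> are bounded below by some \<open>\<delta>\<close>, so for \<open>\<lambda>\<delta> > 4C\<close> such points lie in the zero
  sets. Finally, expanding \<open>\<parallel>(u\<^sub>\<lambda>, v\<^sub>\<lambda>) - (u, v)\<parallel>\<^sup>2\<close> and using the energy bound against
  arbitrary elements of \<open>\<N>\<^sub>\<Omega>\<close> yields both strong convergence and minimality.
\<close>

section \<open>Bounded sets of a locally finite connected graph\<close>

lemma finite_relpow_Image:
  assumes "\<And>x. finite {y. 0 < w x y}"
  shows "finite ((edges w ^^ k) `` {x0})"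
proof (induction k)
  case (Suc k)
  have "(edges w ^^ Suc k) `` {x0} = (\<Union>x\<in>(edges w ^^ k) `` {x0}. {y. 0 < w x y})"
    by (auto simp: edges_def Image_def relcomp_unfold)
  then show ?case using Suc assms by auto
qed simp

lemma gdist_relpow:
  assumes "graph_setting w \<mu>"
  shows "(x, y) \<in> edges w ^^ gdist w x y"
proof -
  have "(x, y) \<in> (edges w)\<^sup>*" using assms by (simp add: graph_setting_def)
  then obtain n where "(x, y) \<in> edges w ^^ n" using rtrancl_power by blast
  then show ?thesis unfolding gdist_def by (rule LeastI)
qed

lemma finite_gdist_ball:
  assumes G: "graph_setting w \<mu>"
  shows "finite {y. gdist w x0 y \<le> R}"
proof (rule finite_subset)
  show "{y. gdist w x0 y \<le> R} \<subseteq> (\<Union>k\<le>R. (edges w ^^ k) `` {x0})"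
    using gdist_relpow[OF G] by blast
  show "finite (\<Union>k\<le>R. (edges w ^^ k) `` {x0})"
    using finite_relpow_Image[of w] G by (simp add: graph_setting_def)
qed

lemma gbounded_imp_finite:
  assumes G: "graph_setting w \<mu>" and "gbounded w A"
  shows "finite A"
proof (cases "A = {}")
  case False
  then obtain x0 where "x0 \<in> A" by auto
  moreover obtain R where "\<forall>x\<in>A. \<forall>y\<in>A. gdist w x y \<le> R"
    using \<open>gbounded w A\<close> by (auto simp: gbounded_def)
  ultimately have "A \<subseteq> {y. gdist w x0 y \<le> R}" by auto
  then show ?thesis using finite_gdist_ball[OF G] finite_subset by blast
qed simp

lemma finite_gclosure:
  assumes "\<And>x. finite {y. 0 < w x y}" and "finite \<Omega>"
  shows "finite (gclosure w \<Omega>)"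
proof -
  have "gboundary w \<Omega> \<subseteq> (\<Union>x\<in>\<Omega>. {y. 0 < w x y})" by (auto simp: gboundary_def)
  moreover have "finite (\<Union>x\<in>\<Omega>. {y. 0 < w x y})" using assms by auto
  ultimately have "finite (gboundary w \<Omega>)" by (rule finite_subset)
  then show ?thesis using assms(2) by (simp add: gclosure_def)
qed

lemma coercive_potential_gap:
  fixes a :: "'v \<Rightarrow> real"
  assumes G: "graph_setting w \<mu>" and nonneg: "\<forall>x. 0 \<le> a x"
    and coercive: "\<forall>M. \<exists>R. \<forall>x. R \<le> gdist w x0 x \<longrightarrow> M \<le> a x"
  shows "\<exists>\<delta>>0. \<forall>x. a x < \<delta> \<longrightarrow> a x = 0"
proof -
  obtain R where R: "\<forall>x. R \<le> gdist w x0 x \<longrightarrow> 1 \<le> a x" using coercive by blast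
  define D where "D = insert 1 (a ` {x. gdist w x0 x \<le> R \<and> 0 < a x})"
  have "finite {x. gdist w x0 x \<le> R \<and> 0 < a x}"
    using finite_gdist_ball[OF G, of x0 R] by (rule rev_finite_subset) blast
  then have D: "finite D" "D \<noteq> {}" "\<forall>d\<in>D. 0 < d"
    unfolding D_def by auto
  have "a x = 0" if ax: "a x < Min D" for x
  proof (rule ccontr)
    assume "a x \<noteq> 0"
    with nonneg have pos: "0 < a x" by (simp add: order_less_le)
    have "Min D \<le> 1" using D(1) unfolding D_def by (rule Min_le) simp
    then have "\<not> R \<le> gdist w x0 x" using R ax by fastforce
    then have "a x \<in> D" using pos unfolding D_def by auto
    then have "Min D \<le> a x" using D(1) by (rule Min_le[rotated])
    then show False using ax by simp
  qed
  moreover have "0 < Min D" using D by simp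
  ultimately show ?thesis by blast
qed

definition signed_powr :: "real \<Rightarrow> real \<Rightarrow> real" where
  "signed_powr s y = \<bar>y\<bar> powr s * sgn y"

lemma has_real_derivative_abs_powr:
  fixes s y :: real
  assumes s: "1 < s"
  shows "((\<lambda>y. \<bar>y\<bar> powr s) has_real_derivative s * signed_powr (s - 1) y) (at y)"
proof -
  consider "y > 0" | "y < 0" | "y = 0" by linarith
  then have "((\<lambda>y. \<bar>y\<bar> powr s) has_real_derivative s * \<bar>y\<bar> powr (s - 1) * sgn y) (at y)"
  proof cases
    case 1
    have "((\<lambda>y. y powr s) has_real_derivative s * \<bar>y\<bar> powr (s - 1) * sgn y) (at y)"
      using has_real_derivative_powr[OF 1, of s] 1 by simp
    then show ?thesis
      by (rule has_field_derivative_transform_within_open[where S="{0<..}"]) (use 1 in auto)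
  next
    case 2
    have "((\<lambda>y. (- y) powr s) has_real_derivative s * \<bar>y\<bar> powr (s - 1) * sgn y) (at y)"
      using has_real_derivative_powr[of "-y" s] 2 by (auto intro!: derivative_eq_intros)
    then show ?thesis
      by (rule has_field_derivative_transform_within_open[where S="{..<0}"]) (use 2 in auto)
  next
    case 3
    have lim: "((\<lambda>h. \<bar>h\<bar> powr (s - 1)) \<longlongrightarrow> 0) (at (0::real))"
      using s by (intro tendsto_zero_powrI) (auto intro!: tendsto_eq_intros)
    have "((\<lambda>h. (\<bar>h\<bar> powr s - \<bar>0\<bar> powr s) / (h - 0)) \<longlongrightarrow> 0) (at (0::real))"
    proof (rule tendsto_rabs_zero_cancel, rule Lim_transform_within[OF lim zero_less_one])
      fix h :: real assume "0 < dist h 0"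
      then have "h \<noteq> 0" by auto
      then show "\<bar>h\<bar> powr (s - 1) = \<bar>(\<bar>h\<bar> powr s - \<bar>0\<bar> powr s) / (h - 0)\<bar>"
        by (simp add: powr_diff abs_divide)
    qed
    then show ?thesis using 3 by (simp add: has_field_derivative_iff)
  qed
  then show ?thesis by (simp add: signed_powr_def mult.assoc)
qed

lemma tendsto_signed_powr [tendsto_intros]:
  fixes f :: "'a \<Rightarrow> real"
  assumes f: "(f \<longlongrightarrow> l) F" and r: "0 < r"
  shows "((\<lambda>x. signed_powr r (f x)) \<longlongrightarrow> signed_powr r l) F"
proof (cases "l = 0")
  case True
  have "((\<lambda>x. \<bar>f x\<bar> powr r) \<longlongrightarrow> 0) F"
    using f True r by (intro tendsto_zero_powrI) (auto simp: tendsto_rabs_zero_iff)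
  then have "((\<lambda>x. \<bar>\<bar>f x\<bar> powr r * sgn (f x)\<bar>) \<longlongrightarrow> 0) F"
    by (rule Lim_transform_eventually) (auto simp: abs_mult sgn_if)
  then show ?thesis using True by (simp add: tendsto_rabs_zero_iff signed_powr_def)
qed (use f r in \<open>auto intro!: tendsto_intros simp: signed_powr_def\<close>)

lemma tendsto_abs_powr [tendsto_intros]:
  fixes f :: "'a \<Rightarrow> real"
  assumes "(f \<longlongrightarrow> l) F" and "0 < r"
  shows "((\<lambda>x. \<bar>f x\<bar> powr r) \<longlongrightarrow> \<bar>l\<bar> powr r) F"
  by (rule tendsto_powr') (use assms in \<open>auto intro!: tendsto_intros\<close>)

lemma abs_powr_mult_abs_powr_le_half:
  fixes u v \<alpha> \<beta> :: real
  assumes "1 < \<alpha>" "1 < \<beta>" and "\<bar>u\<bar> \<le> 1/2" "\<bar>v\<bar> \<le> 1/2"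
  shows "\<bar>u\<bar> powr \<alpha> * \<bar>v\<bar> powr \<beta> \<le> (1/2) powr (\<alpha> + \<beta> - 2) * (u\<^sup>2 + v\<^sup>2)"
proof -
  define m where "m = max \<bar>u\<bar> \<bar>v\<bar>"
  have m: "0 \<le> m" "m \<le> 1/2" using assms by (auto simp: m_def)
  have "\<bar>u\<bar> powr \<alpha> * \<bar>v\<bar> powr \<beta> \<le> m powr \<alpha> * m powr \<beta>"
    by (intro mult_mono powr_mono2) (use assms in \<open>auto simp: m_def\<close>)
  also have "\<dots> = m powr (\<alpha> + \<beta> - 2) * m powr 2" by (simp add: powr_add[symmetric])
  also have "\<dots> \<le> (1/2) powr (\<alpha> + \<beta> - 2) * m powr 2"
    by (intro mult_right_mono powr_mono2) (use assms m in auto)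
  also have "m powr 2 = m\<^sup>2"
    using m by (cases "m = 0") (auto simp: powr_numeral)
  also have "m\<^sup>2 \<le> u\<^sup>2 + v\<^sup>2"
    by (simp add: m_def max_def)
  finally show ?thesis by (simp add: mult_left_mono)
qed

lemma finite_bounded_convergent_subseq:
  fixes f :: "nat \<Rightarrow> 'a \<Rightarrow> 'b::heine_borel"
  assumes "finite S" and "\<And>x. x \<in> S \<Longrightarrow> bounded (range (\<lambda>n. f n x))"
  shows "\<exists>r. strict_mono r \<and> (\<forall>x\<in>S. \<exists>l. (\<lambda>n. f (r n) x) \<longlonglongrightarrow> l)"
  using assms
proof (induction S rule: finite_induct)
  case empty
  show ?case using strict_mono_id by blast
next
  case (insert y S)
  then obtain r where r: "strict_mono r" "\<forall>x\<in>S. \<exists>l. (\<lambda>n. f (r n) x) \<longlonglongrightarrow> l" by auto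
  have "bounded (range (\<lambda>n. f (r n) y))"
    by (rule bounded_subset[OF insert.prems[of y]]) auto
  then obtain l s where s: "strict_mono s" "((\<lambda>n. f (r n) y) \<circ> s) \<longlonglongrightarrow> l"
    using bounded_imp_convergent_subsequence by blast
  have "(\<lambda>n. f (r (s n)) x) \<longlonglongrightarrow> l'" if "(\<lambda>n. f (r n) x) \<longlonglongrightarrow> l'" for x l'
    using LIMSEQ_subseq_LIMSEQ[OF that s(1)] by (simp add: o_def)
  then have "\<forall>x\<in>insert y S. \<exists>l. (\<lambda>n. f ((r \<circ> s) n) x) \<longlonglongrightarrow> l"
    using r(2) s(2) by (fastforce simp: o_def)
  then show ?case using strict_mono_o[OF r(1) s(1)] by blast
qed

lemma LIMSEQ_zero_if_weighted_square_bounded: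
  fixes X L :: "nat \<Rightarrow> real"
  assumes c: "0 < c" and L: "filterlim L at_top sequentially"
    and bound: "\<And>n. 0 < L n" "\<And>n. L n * c * (X n)\<^sup>2 \<le> C"
  shows "X \<longlonglongrightarrow> 0"
proof -
  have "(\<lambda>n. (X n)\<^sup>2) \<longlonglongrightarrow> 0"
  proof (rule tendsto_sandwich[of "\<lambda>_. 0" _ _ "\<lambda>n. C / c * inverse (L n)"])
    show "\<forall>\<^sub>F n in sequentially. (X n)\<^sup>2 \<le> C / c * inverse (L n)"
      using bound c by (simp add: field_simps mult.commute mult.left_commute)
    show "(\<lambda>n. C / c * inverse (L n)) \<longlonglongrightarrow> 0"
      using tendsto_mult_right_zero[OF tendsto_inverse_0_at_top[OF L]] .
  qed auto
  then have "(\<lambda>n. sqrt ((X n)\<^sup>2)) \<longlonglongrightarrow> sqrt 0" by (rule tendsto_real_sqrt)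
  then show ?thesis by (simp add: tendsto_rabs_zero_iff)
qed

section \<open>The carre du champ operator\<close>

lemma Gam_commute: "Gam w \<mu> u v x = Gam w \<mu> v u x"
  unfolding Gam_def by (simp add: mult.commute mult.left_commute)

lemma Gam_add_left: "Gam w \<mu> (\<lambda>y. u y + v y) z x = Gam w \<mu> u z x + Gam w \<mu> v z x"
proof -
  have "(\<Sum>y | 0 < w x y. w x y * ((u y + v y) - (u x + v x)) * (z y - z x))
     = (\<Sum>y | 0 < w x y. w x y * (u y - u x) * (z y - z x))
       + (\<Sum>y | 0 < w x y. w x y * (v y - v x) * (z y - z x))"
    unfolding sum.distrib[symmetric] by (rule sum.cong) (auto simp: algebra_simps)
  then show ?thesis unfolding Gam_def by (simp add: ring_distribs)
qed

lemma Gam_cmult_left: "Gam w \<mu> (\<lambda>y. c * u y) z x = c * Gam w \<mu> u z x"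
proof -
  have "(\<Sum>y | 0 < w x y. w x y * (c * u y - c * u x) * (z y - z x))
     = c * (\<Sum>y | 0 < w x y. w x y * (u y - u x) * (z y - z x))"
    unfolding sum_distrib_left by (rule sum.cong) (auto simp: algebra_simps)
  then show ?thesis unfolding Gam_def by simp
qed

lemma Gam_add_right: "Gam w \<mu> z (\<lambda>y. u y + v y) x = Gam w \<mu> z u x + Gam w \<mu> z v x"
  using Gam_add_left Gam_commute by metis

lemma Gam_cmult_right: "Gam w \<mu> z (\<lambda>y. c * u y) x = c * Gam w \<mu> z u x"
  using Gam_cmult_left Gam_commute by metis

lemma grad2_line:
  "grad2 w \<mu> (\<lambda>y. u y + t * q y) x = grad2 w \<mu> u x + 2 * t * Gam w \<mu> u q x + t\<^sup>2 * grad2 w \<mu> q x"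
  unfolding grad2_def
  by (simp add: Gam_add_left Gam_add_right Gam_cmult_left Gam_cmult_right Gam_commute[of w \<mu> q u]
      power2_eq_square algebra_simps)

lemma grad2_cmult: "grad2 w \<mu> (\<lambda>y. c * u y) x = c\<^sup>2 * grad2 w \<mu> u x"
  unfolding grad2_def by (simp add: Gam_cmult_left Gam_cmult_right power2_eq_square)

lemma grad2_nonneg:
  assumes "0 < \<mu> x" "\<forall>x y. 0 \<le> w x y"
  shows "0 \<le> grad2 w \<mu> u x"
proof -
  have "0 \<le> (\<Sum>y | 0 < w x y. w x y * (u y - u x) * (u y - u x))"
    by (rule sum_nonneg) (use assms in \<open>auto simp: mult.assoc\<close>)
  then show ?thesis using assms by (simp add: grad2_def Gam_def)
qed

lemma Gam_eq_0_outside_gclosure: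
  assumes sym: "\<forall>x y. w x y = w y x" and u: "u \<in> W0 \<Omega>" and x: "x \<notin> gclosure w \<Omega>"
  shows "Gam w \<mu> u z x = 0"
proof -
  have "u y = 0" if "0 < w x y" for y
  proof (rule ccontr)
    assume "u y \<noteq> 0"
    then have "y \<in> \<Omega>" using u by (auto simp: W0_def)
    then have "x \<in> gclosure w \<Omega>" using that sym by (auto simp: gclosure_def gboundary_def)
    then show False using x by simp
  qed
  moreover have "u x = 0" using u x by (auto simp: W0_def gclosure_def)
  ultimately show ?thesis unfolding Gam_def by simp
qed

lemma integ_cmult: "integ \<mu> (\<lambda>x. c * f x) = c * integ \<mu> f"
  unfolding integ_def by (simp add: mult.left_commute[of "\<mu> _" c] infsum_cmult_right')

lemma integrable_V_add:
  "integrable_V \<mu> f \<Longrightarrow> integrable_V \<mu> g \<Longrightarrow> integrable_V \<mu> (\<lambda>x. f x + g x)"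
  unfolding integrable_V_def distrib_left by (rule summable_on_add)

lemma integ_add:
  assumes "integrable_V \<mu> f" "integrable_V \<mu> g"
  shows "integ \<mu> (\<lambda>x. f x + g x) = integ \<mu> f + integ \<mu> g"
  using assms unfolding integ_def integrable_V_def distrib_left by (rule infsum_add)

lemma
  assumes "finite F" and "\<And>x. x \<notin> F \<Longrightarrow> f x = 0"
  shows integ_finite_support: "integ \<mu> f = (\<Sum>x\<in>F. \<mu> x * f x)"
    and integrable_V_finite_support: "integrable_V \<mu> f"
proof -
  have "infsum (\<lambda>x. \<mu> x * f x) UNIV = infsum (\<lambda>x. \<mu> x * f x) F"
    by (rule infsum_cong_neutral) (use assms in auto)
  then show "integ \<mu> f = (\<Sum>x\<in>F. \<mu> x * f x)" unfolding integ_def using assms(1) by simp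
  show "integrable_V \<mu> f" unfolding integrable_V_def
    by (subst summable_on_cong_neutral[where T=F]) (use assms in auto)
qed

lemma integ_nonneg: "(\<And>x. 0 \<le> \<mu> x) \<Longrightarrow> (\<And>x. 0 \<le> f x) \<Longrightarrow> 0 \<le> integ \<mu> f"
  unfolding integ_def by (intro infsum_nonneg mult_nonneg_nonneg)

lemma integ_mono:
  assumes "integrable_V \<mu> f" "integrable_V \<mu> g" "\<And>x. 0 \<le> \<mu> x" "\<And>x. f x \<le> g x"
  shows "integ \<mu> f \<le> integ \<mu> g"
  using assms unfolding integ_def integrable_V_def by (intro infsum_mono mult_left_mono)

lemma single_le_integ:
  assumes "integrable_V \<mu> f" "\<And>x. 0 \<le> \<mu> x" "\<And>x. 0 \<le> f x"
  shows "\<mu> x * f x \<le> integ \<mu> f"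
proof -
  have "infsum (\<lambda>x. \<mu> x * f x) {x} \<le> infsum (\<lambda>x. \<mu> x * f x) UNIV"
    by (rule infsum_mono_neutral) (use assms in \<open>auto simp: integrable_V_def\<close>)
  then show ?thesis by (simp add: integ_def)
qed

lemma integ_not_integrable: "\<not> integrable_V \<mu> f \<Longrightarrow> integ \<mu> f = 0"
  unfolding integ_def integrable_V_def by (rule infsum_not_exists)

definition pair_line :: "'v fpair \<Rightarrow> 'v fpair \<Rightarrow> real \<Rightarrow> 'v fpair" where
  "pair_line p q t = (\<lambda>x. fst p x + t * fst q x, \<lambda>x. snd p x + t * snd q x)"

definition pair_scale :: "real \<Rightarrow> 'v fpair \<Rightarrow> 'v fpair" where
  "pair_scale c p = (\<lambda>x. c * fst p x, \<lambda>x. c * snd p x)"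

lemma dirderiv_iff_pair_line:
  "dirderiv J p q D \<longleftrightarrow> ((\<lambda>t. J (pair_line p q t)) has_real_derivative D) (at 0)"
  by (simp add: dirderiv_def pair_line_def)

lemma dirderiv_unique: "dirderiv J p q D \<Longrightarrow> dirderiv J p q E \<Longrightarrow> D = E"
  unfolding dirderiv_def using DERIV_unique by blast

lemma dirderiv_self_of_homogeneous:
  assumes J: "\<And>c. J (pair_scale c p) = c\<^sup>2 * A - \<bar>c\<bar> powr s * B" and s: "1 < s"
  shows "dirderiv J p p (2 * A - s * B)"
proof -
  have "pair_line p p t = pair_scale (1 + t) p" for t
    by (simp add: pair_line_def pair_scale_def algebra_simps)
  then have eq: "(\<lambda>t. J (pair_line p p t)) = (\<lambda>t. (1 + t)\<^sup>2 * A - \<bar>1 + t\<bar> powr s * B)"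
    using J by simp
  have "((\<lambda>t. 1 + t) has_real_derivative 1) (at (0::real))" by (auto intro!: derivative_eq_intros)
  from DERIV_chain2[OF has_real_derivative_abs_powr[OF s, of "1 + 0"] this]
  have "((\<lambda>t. \<bar>1 + t\<bar> powr s) has_real_derivative s) (at 0)" by (simp add: signed_powr_def)
  from DERIV_cmult_right[OF this, of B]
  have "((\<lambda>t. \<bar>1 + t\<bar> powr s * B) has_real_derivative s * B) (at 0)" .
  moreover have "((\<lambda>t. (1 + t)\<^sup>2 * A) has_real_derivative 2 * A) (at 0)"
    by (auto intro!: derivative_eq_intros)
  ultimately have "((\<lambda>t. (1 + t)\<^sup>2 * A - \<bar>1 + t\<bar> powr s * B) has_real_derivative 2 * A - s * B) (at 0)"
    by (rule DERIV_diff[rotated])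
  then show ?thesis unfolding dirderiv_iff_pair_line eq .
qed

section \<open>The energy functionals\<close>

locale steep_well =
  fixes w :: "'v \<Rightarrow> 'v \<Rightarrow> real" and \<mu> a b :: "'v \<Rightarrow> real" and \<alpha> \<beta> :: real
  assumes graph: "graph_setting w \<mu>"
    and \<alpha>: "1 < \<alpha>" and \<beta>: "1 < \<beta>"
    and a_nonneg: "\<forall>x. 0 \<le> a x" and b_nonneg: "\<forall>x. 0 \<le> b x"
    and finite_Oa: "finite {x. a x = 0}" and finite_Ob: "finite {x. b x = 0}"
begin

abbreviation "Oa \<equiv> {x. a x = 0}"
abbreviation "Ob \<equiv> {x. b x = 0}"
abbreviation "T \<equiv> gclosure w Oa \<union> gclosure w Ob"
abbreviation "HO \<equiv> HOmega Oa Ob"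
abbreviation "JO \<equiv> JOmega w \<mu> \<alpha> \<beta> Oa Ob"
abbreviation "JL l \<equiv> Jlam w \<mu> \<alpha> \<beta> a b l"
abbreviation "HL l \<equiv> Hlam w \<mu> a b l"

lemma w_sym: "\<forall>x y. w x y = w y x"
  using graph by (simp add: graph_setting_def)

lemma w_nonneg: "\<forall>x y. 0 \<le> w x y"
  using graph by (simp add: graph_setting_def)

lemma \<mu>_lower_bound: "\<exists>m>0. \<forall>x. m \<le> \<mu> x"
  using graph by (simp add: graph_setting_def)

lemma \<mu>_pos: "0 < \<mu> x"
  using \<mu>_lower_bound less_le_trans by blast

lemma locally_finite: "finite {y. 0 < w x y}"
  using graph unfolding graph_setting_def by blast

lemma finite_T: "finite T"
  using finite_gclosure[OF locally_finite] finite_Oa finite_Ob by simp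

lemma zero_sets_subset_T: "Oa \<union> Ob \<subseteq> T"
  by (auto simp: gclosure_def)

lemma gap_of_coercive:
  assumes "\<exists>x0. \<forall>M. \<exists>R. \<forall>x. gdist w x0 x \<ge> R \<longrightarrow> a x \<ge> M \<and> b x \<ge> M"
  shows "\<exists>\<delta>>0. \<forall>x. (a x < \<delta> \<longrightarrow> a x = 0) \<and> (b x < \<delta> \<longrightarrow> b x = 0)"
proof -
  from assms obtain x0 where x0: "\<forall>M. \<exists>R. \<forall>x. R \<le> gdist w x0 x \<longrightarrow> M \<le> a x \<and> M \<le> b x" by blast
  obtain \<delta>a where "0 < \<delta>a" "\<forall>x. a x < \<delta>a \<longrightarrow> a x = 0"
    using coercive_potential_gap[OF graph a_nonneg, of x0] x0 by meson
  moreover obtain \<delta>b where "0 < \<delta>b" "\<forall>x. b x < \<delta>b \<longrightarrow> b x = 0"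
    using coercive_potential_gap[OF graph b_nonneg, of x0] x0 by meson
  ultimately show ?thesis by (intro exI[of _ "min \<delta>a \<delta>b"]) auto
qed

text \<open>\<open>hdens p\<close> and \<open>qdens l p\<close> are the integrands of \<open>\<parallel>p\<parallel>\<^sup>2\<^sub>H\<close> and \<open>\<parallel>p\<parallel>\<^sup>2\<^sub>H\<^sub>\<lambda>\<close> (with
  \<open>\<lambda> = l\<close>), \<open>hform\<close> is the integrand of the inner product of \<open>H\<close>, and \<open>ndens p\<close> that of the
  coupling term \<open>\<integral>|u|\<^sup>\<alpha>|v|\<^sup>\<beta>\<close>; \<open>IQ\<close> and \<open>IN\<close> are the corresponding integrals.\<close>
definition hdens :: "'v fpair \<Rightarrow> 'v \<Rightarrow> real" where
  "hdens p x = grad2 w \<mu> (fst p) x + grad2 w \<mu> (snd p) x + (fst p x)\<^sup>2 + (snd p x)\<^sup>2"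

definition hform :: "'v fpair \<Rightarrow> 'v fpair \<Rightarrow> 'v \<Rightarrow> real" where
  "hform p q x = Gam w \<mu> (fst p) (fst q) x + Gam w \<mu> (snd p) (snd q) x
     + fst p x * fst q x + snd p x * snd q x"

definition qdens :: "real \<Rightarrow> 'v fpair \<Rightarrow> 'v \<Rightarrow> real" where
  "qdens l p x = hdens p x + l * (a x * (fst p x)\<^sup>2 + b x * (snd p x)\<^sup>2)"

definition ndens :: "'v fpair \<Rightarrow> 'v \<Rightarrow> real" where
  "ndens p x = \<bar>fst p x\<bar> powr \<alpha> * \<bar>snd p x\<bar> powr \<beta>"

definition IQ :: "real \<Rightarrow> 'v fpair \<Rightarrow> real" where
  "IQ l p = integ \<mu> (qdens l p)"

definition IN :: "'v fpair \<Rightarrow> real" where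
  "IN p = integ \<mu> (ndens p)"

definition \<kappa> :: real where
  "\<kappa> = 1/2 - 1/(\<alpha> + \<beta>)"

lemma \<kappa>_pos: "0 < \<kappa>"
  using \<alpha> \<beta> by (simp add: \<kappa>_def field_simps)

lemma hform_self: "hform p p x = hdens p x"
  unfolding hform_def hdens_def grad2_def by (simp add: power2_eq_square)

lemma hdens_pair_line:
  "hdens (pair_line f q t) x = hdens f x + 2 * t * hform f q x + t\<^sup>2 * hdens q x"
  unfolding hdens_def hform_def pair_line_def by (simp add: grad2_line power2_eq_square algebra_simps)

lemma hdens_ge_squares: "(fst p x)\<^sup>2 + (snd p x)\<^sup>2 \<le> hdens p x"
  using grad2_nonneg[OF \<mu>_pos w_nonneg] by (simp add: hdens_def add_nonneg_nonneg)

lemma hdens_nonneg: "0 \<le> hdens p x"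
  by (rule order_trans[OF _ hdens_ge_squares]) simp

lemma hdens_le_qdens: "0 \<le> l \<Longrightarrow> hdens p x \<le> qdens l p x"
  unfolding qdens_def using a_nonneg b_nonneg by simp

lemma squares_le_qdens: "0 \<le> l \<Longrightarrow> (fst p x)\<^sup>2 + (snd p x)\<^sup>2 \<le> qdens l p x"
  using hdens_ge_squares hdens_le_qdens by (rule order_trans)

lemma qdens_nonneg: "0 \<le> l \<Longrightarrow> 0 \<le> qdens l p x"
  using hdens_nonneg hdens_le_qdens order_trans by blast

lemma normH_eq: "normH w \<mu> p = sqrt (integ \<mu> (hdens p))"
  unfolding normH_def hdens_def ..

lemma Jlam_eq: "JL l p = IQ l p / 2 - IN p / (\<alpha> + \<beta>)"
proof -
  have "(\<lambda>x. grad2 w \<mu> (fst p) x + grad2 w \<mu> (snd p) x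
           + (l * a x + 1) * (fst p x)\<^sup>2 + (l * b x + 1) * (snd p x)\<^sup>2) = qdens l p"
    by (rule ext) (simp add: qdens_def hdens_def algebra_simps)
  moreover have "(\<lambda>x. \<bar>fst p x\<bar> powr \<alpha> * \<bar>snd p x\<bar> powr \<beta>) = ndens p"
    by (rule ext) (simp add: ndens_def)
  ultimately show ?thesis by (simp add: Jlam_def IQ_def IN_def)
qed

lemma integrable_hdens:
  assumes "p \<in> Hspace w \<mu>"
  shows "integrable_V \<mu> (hdens p)"
proof -
  from assms have "integrable_V \<mu> (\<lambda>x. grad2 w \<mu> (fst p) x + (fst p x)\<^sup>2)"
    and "integrable_V \<mu> (\<lambda>x. grad2 w \<mu> (snd p) x + (snd p x)\<^sup>2)"
    by (auto simp: Hspace_def W12_def mem_Times_iff)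
  from integrable_V_add[OF this] show ?thesis
    by (simp add: hdens_def[abs_def] algebra_simps)
qed

lemma integrable_qdens:
  assumes "p \<in> HL l"
  shows "integrable_V \<mu> (qdens l p)"
proof -
  from assms have "integrable_V \<mu> (hdens p)"
    and "integrable_V \<mu> (\<lambda>x. l * a x * (fst p x)\<^sup>2 + l * b x * (snd p x)\<^sup>2)"
    using integrable_hdens by (auto simp: Hlam_def)
  from integrable_V_add[OF this] show ?thesis
    by (simp add: qdens_def[abs_def] algebra_simps)
qed

lemma IQ_nonneg: "0 \<le> l \<Longrightarrow> 0 \<le> IQ l p"
  unfolding IQ_def using \<mu>_pos qdens_nonneg by (intro integ_nonneg) (auto intro: less_imp_le)

lemma qdens_le_IQ: "p \<in> HL l \<Longrightarrow> 0 \<le> l \<Longrightarrow> \<mu> x * qdens l p x \<le> IQ l p"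
  unfolding IQ_def using \<mu>_pos qdens_nonneg integrable_qdens
  by (intro single_le_integ) (auto intro: less_imp_le)

lemma integ_hdens_le_IQ: "p \<in> HL l \<Longrightarrow> 0 \<le> l \<Longrightarrow> integ \<mu> (hdens p) \<le> IQ l p"
  unfolding IQ_def using \<mu>_pos integrable_qdens integrable_hdens hdens_le_qdens
  by (intro integ_mono) (auto simp: Hlam_def intro: less_imp_le)

lemma IQ_pos:
  assumes "p \<in> HL l" "0 \<le> l" "p \<noteq> (\<lambda>_. 0, \<lambda>_. 0)"
  shows "0 < IQ l p"
proof -
  obtain x where "fst p x \<noteq> 0 \<or> snd p x \<noteq> 0"
    using assms(3) by (cases p) auto
  then have "0 < (fst p x)\<^sup>2 + (snd p x)\<^sup>2" by (auto simp: add_pos_nonneg add_nonneg_pos)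
  also have "\<dots> \<le> qdens l p x" using squares_le_qdens[OF assms(2)] .
  finally have "0 < \<mu> x * qdens l p x" using \<mu>_pos by simp
  also have "\<dots> \<le> IQ l p" using qdens_le_IQ assms by blast
  finally show ?thesis .
qed

lemma IQ_pair_scale: "IQ l (pair_scale c p) = c\<^sup>2 * IQ l p"
proof -
  have "qdens l (pair_scale c p) = (\<lambda>x. c\<^sup>2 * qdens l p x)"
    by (auto simp: qdens_def hdens_def pair_scale_def grad2_cmult power_mult_distrib algebra_simps)
  then show ?thesis by (simp add: IQ_def integ_cmult)
qed

lemma IN_pair_scale: "IN (pair_scale c p) = \<bar>c\<bar> powr (\<alpha> + \<beta>) * IN p"
proof -
  have "ndens (pair_scale c p) = (\<lambda>x. \<bar>c\<bar> powr (\<alpha> + \<beta>) * ndens p x)"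
    by (auto simp: ndens_def pair_scale_def abs_mult powr_mult powr_add)
  then show ?thesis by (simp add: IN_def integ_cmult)
qed

lemma Jlam_pair_scale:
  "JL l (pair_scale c p) = c\<^sup>2 * (IQ l p / 2) - \<bar>c\<bar> powr (\<alpha> + \<beta>) * (IN p / (\<alpha> + \<beta>))"
  by (simp add: Jlam_eq IQ_pair_scale IN_pair_scale)

lemma dirderiv_Jlam_self: "dirderiv (JL l) p p (IQ l p - IN p)"
proof -
  have "dirderiv (JL l) p p (2 * (IQ l p / 2) - (\<alpha> + \<beta>) * (IN p / (\<alpha> + \<beta>)))"
    by (rule dirderiv_self_of_homogeneous[OF Jlam_pair_scale]) (use \<alpha> \<beta> in auto)
  then show ?thesis using \<alpha> \<beta> by simp
qed

lemma
  assumes "p \<in> nehari (JL l) X"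
  shows nehari_Jlam_IN_eq: "IN p = IQ l p"
    and nehari_Jlam_energy: "JL l p = \<kappa> * IQ l p"
proof -
  from assms have "dirderiv (JL l) p p 0" by (simp add: nehari_def)
  with dirderiv_Jlam_self have "IQ l p - IN p = 0" by (rule dirderiv_unique)
  then show eq: "IN p = IQ l p" by simp
  show "JL l p = \<kappa> * IQ l p" by (simp add: Jlam_eq eq \<kappa>_def algebra_simps)
qed

lemma nehari_Jlam_integrable_ndens:
  assumes "0 \<le> l" "p \<in> nehari (JL l) (HL l)"
  shows "integrable_V \<mu> (ndens p)"
proof (rule ccontr)
  assume "\<not> integrable_V \<mu> (ndens p)"
  then have "IN p = 0" unfolding IN_def by (rule integ_not_integrable)
  moreover have "0 < IQ l p" using IQ_pos assms by (auto simp: nehari_def)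
  ultimately show False using nehari_Jlam_IN_eq[OF assms(2)] by simp
qed

lemma ground_state_Jlam_le:
  assumes "0 \<le> l" "ground_state (JL l) X p" "q \<in> nehari (JL l) X"
  shows "JL l p \<le> JL l q"
proof -
  have "bdd_below (JL l ` nehari (JL l) X)"
    using nehari_Jlam_energy \<kappa>_pos IQ_nonneg[OF assms(1)] by (intro bdd_belowI[of _ 0]) auto
  then show ?thesis using assms(2,3) by (auto simp: ground_state_def intro: cINF_lower)
qed

text \<open>If both components were at most \<open>1/2\<close>, the nonlinear term would be at most
  \<open>(1/2)\<^bsup>\<alpha>+\<beta>-2\<^esup> < 1\<close> times the quadratic one, contradicting the Nehari identity.\<close>
lemma nehari_Jlam_large_component:
  assumes l: "0 \<le> l" and p: "p \<in> nehari (JL l) (HL l)"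
  shows "\<exists>x. 1/2 < \<bar>fst p x\<bar> \<or> 1/2 < \<bar>snd p x\<bar>"
proof (rule ccontr)
  assume "\<not> ?thesis"
  then have small: "\<bar>fst p x\<bar> \<le> 1/2" "\<bar>snd p x\<bar> \<le> 1/2" for x by (simp_all add: not_less)
  have pH: "p \<in> HL l" and "p \<noteq> (\<lambda>_. 0, \<lambda>_. 0)" using p by (auto simp: nehari_def)
  then have IQ_p: "0 < IQ l p" using IQ_pos l by blast
  define \<theta> :: real where "\<theta> = (1/2) powr (\<alpha> + \<beta> - 2)"
  have "IN p \<le> integ \<mu> (\<lambda>x. \<theta> * qdens l p x)"
    unfolding IN_def
  proof (rule integ_mono)
    show "integrable_V \<mu> (ndens p)" by (rule nehari_Jlam_integrable_ndens[OF l p])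
    show "integrable_V \<mu> (\<lambda>x. \<theta> * qdens l p x)"
      using integrable_qdens[OF pH] by (simp add: integrable_V_def mult.left_commute summable_on_cmult_right)
    show "0 \<le> \<mu> x" for x using \<mu>_pos less_imp_le by blast
    fix x
    have "ndens p x \<le> \<theta> * ((fst p x)\<^sup>2 + (snd p x)\<^sup>2)"
      unfolding ndens_def \<theta>_def by (rule abs_powr_mult_abs_powr_le_half[OF \<alpha> \<beta> small])
    also have "\<dots> \<le> \<theta> * qdens l p x"
      using squares_le_qdens[OF l] by (intro mult_left_mono) (auto simp: \<theta>_def)
    finally show "ndens p x \<le> \<theta> * qdens l p x" .
  qed
  also have "\<dots> = \<theta> * IQ l p" by (simp add: IQ_def integ_cmult)
  also have "\<dots> < IQ l p"
  proof -
    have "\<theta> < 1 powr (\<alpha> + \<beta> - 2)" unfolding \<theta>_def by (rule powr_less_mono2) (use \<alpha> \<beta> in auto)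
    then show ?thesis using IQ_p by simp
  qed
  finally show False using nehari_Jlam_IN_eq[OF p] by simp
qed

section \<open>Pairs supported in the zero sets\<close>

lemma HOmega_vanish:
  assumes "p \<in> HO"
  shows "a x \<noteq> 0 \<Longrightarrow> fst p x = 0" and "b x \<noteq> 0 \<Longrightarrow> snd p x = 0"
  using assms by (auto simp: HOmega_def W0_def)

lemma HOmega_vanish_outside_T:
  assumes "p \<in> HO" "x \<notin> T"
  shows "fst p x = 0" and "snd p x = 0"
  using HOmega_vanish[OF assms(1)] assms(2) zero_sets_subset_T by auto

lemma hform_vanish_outside_T:
  assumes "q \<in> HO" "x \<notin> T"
  shows "hform f q x = 0"
proof -
  have "Gam w \<mu> (fst q) (fst f) x = 0" "Gam w \<mu> (snd q) (snd f) x = 0"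
    using assms w_sym by (auto simp: HOmega_def intro!: Gam_eq_0_outside_gclosure)
  then show ?thesis using HOmega_vanish_outside_T[OF assms]
    by (simp add: hform_def Gam_commute[of w \<mu> "fst f"] Gam_commute[of w \<mu> "snd f"])
qed

lemma hdens_vanish_outside_T: "q \<in> HO \<Longrightarrow> x \<notin> T \<Longrightarrow> hdens q x = 0"
  using hform_vanish_outside_T hform_self by metis

lemma ndens_vanish_outside_zero_sets:
  assumes "p \<in> HO" "x \<notin> Oa \<union> Ob"
  shows "ndens p x = 0"
  using HOmega_vanish[OF assms(1)] assms(2) by (auto simp: ndens_def)

lemma qdens_HOmega: "p \<in> HO \<Longrightarrow> qdens l p x = hdens p x"
  using HOmega_vanish by (cases "a x = 0"; cases "b x = 0") (auto simp: qdens_def)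

lemma qdens_pair_line_HOmega:
  assumes "q \<in> HO"
  shows "qdens l (pair_line f q t) x = qdens l f x + 2 * t * hform f q x + t\<^sup>2 * hdens q x"
proof -
  have "a x * fst q x = 0" "b x * snd q x = 0"
    using HOmega_vanish[OF assms] by (cases "a x = 0"; auto)+
  then have eq: "a x * (fst f x + t * fst q x)\<^sup>2 = a x * (fst f x)\<^sup>2"
    "b x * (snd f x + t * snd q x)\<^sup>2 = b x * (snd f x)\<^sup>2"
    by (auto simp: power2_eq_square algebra_simps)
  have "qdens l (pair_line f q t) x = hdens (pair_line f q t) x + (qdens l f x - hdens f x)"
    unfolding qdens_def pair_line_def fst_conv snd_conv eq by simp
  then show ?thesis by (simp add: hdens_pair_line)
qed

lemma IQ_HOmega:
  assumes "p \<in> HO"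
  shows "IQ l p = (\<Sum>x\<in>T. \<mu> x * hdens p x)"
proof -
  have "IQ l p = (\<Sum>x\<in>T. \<mu> x * qdens l p x)" unfolding IQ_def
    by (rule integ_finite_support[OF finite_T]) (simp add: qdens_HOmega[OF assms] hdens_vanish_outside_T[OF assms])
  then show ?thesis by (simp add: qdens_HOmega[OF assms])
qed

lemma integ_hdens_diff_HOmega:
  assumes "f \<in> Hspace w \<mu>" "g \<in> HO"
  shows "integ \<mu> (hdens (pair_line f g (-1)))
    = integ \<mu> (hdens f) + (\<Sum>x\<in>T. \<mu> x * (hdens g x - 2 * hform f g x))"
proof -
  have vanish: "x \<notin> T \<Longrightarrow> hdens g x - 2 * hform f g x = 0" for x
    by (simp add: hdens_vanish_outside_T[OF assms(2)] hform_vanish_outside_T[OF assms(2)])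
  have "hdens (pair_line f g (-1)) = (\<lambda>x. hdens f x + (hdens g x - 2 * hform f g x))"
    by (simp add: fun_eq_iff hdens_pair_line)
  then show ?thesis
    using integ_add[OF integrable_hdens[OF assms(1)] integrable_V_finite_support[OF finite_T vanish]]
      integ_finite_support[OF finite_T vanish] by simp
qed

lemma HOmega_subset_Hlam:
  assumes "p \<in> HO"
  shows "p \<in> HL l"
proof -
  have out: "fst p x = 0" "snd p x = 0" "grad2 w \<mu> (fst p) x = 0" "grad2 w \<mu> (snd p) x = 0"
    if "x \<notin> T" for x
    using HOmega_vanish_outside_T[OF assms that] hdens_vanish_outside_T[OF assms that]
      grad2_nonneg[OF \<mu>_pos w_nonneg] by (simp_all add: hdens_def add_nonneg_eq_0_iff)
  have "integrable_V \<mu> (\<lambda>x. grad2 w \<mu> (fst p) x + (fst p x)\<^sup>2)"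
    "integrable_V \<mu> (\<lambda>x. grad2 w \<mu> (snd p) x + (snd p x)\<^sup>2)"
    "integrable_V \<mu> (\<lambda>x. l * a x * (fst p x)\<^sup>2 + l * b x * (snd p x)\<^sup>2)"
    by (rule integrable_V_finite_support[OF finite_T], simp add: out)+
  then show ?thesis by (simp add: Hlam_def Hspace_def W12_def mem_Times_iff)
qed

lemma Jlam_eq_JOmega:
  assumes "p \<in> HO"
  shows "JL l p = JO p"
proof -
  have "IN p = (\<Sum>x\<in>Oa \<union> Ob. \<mu> x * ndens p x)"
    unfolding IN_def using finite_Oa finite_Ob
    by (intro integ_finite_support) (auto intro: ndens_vanish_outside_zero_sets[OF assms])
  moreover have "(\<Sum>x\<in>Oa \<union> Ob. \<mu> x * ((fst p x)\<^sup>2 + (snd p x)\<^sup>2))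
      = (\<Sum>x\<in>T. \<mu> x * ((fst p x)\<^sup>2 + (snd p x)\<^sup>2))"
    by (rule sum.mono_neutral_left[OF finite_T zero_sets_subset_T]) (use HOmega_vanish[OF assms] in auto)
  moreover have "(\<Sum>x\<in>T. \<mu> x * hdens p x) = (\<Sum>x\<in>T. \<mu> x * (grad2 w \<mu> (fst p) x + grad2 w \<mu> (snd p) x))
      + (\<Sum>x\<in>T. \<mu> x * ((fst p x)\<^sup>2 + (snd p x)\<^sup>2))"
    by (simp add: hdens_def sum.distrib[symmetric] algebra_simps)
  ultimately show ?thesis
    by (simp add: Jlam_eq IQ_HOmega[OF assms] JOmega_def ndens_def algebra_simps)
qed

lemma pair_line_HOmega: "p \<in> HO \<Longrightarrow> q \<in> HO \<Longrightarrow> pair_line p q t \<in> HO"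
  by (auto simp: HOmega_def W0_def pair_line_def)

lemma dirderiv_JOmega_iff_Jlam:
  assumes "p \<in> HO" "q \<in> HO"
  shows "dirderiv JO p q D \<longleftrightarrow> dirderiv (JL l) p q D"
  using Jlam_eq_JOmega[OF pair_line_HOmega[OF assms]] by (simp add: dirderiv_iff_pair_line)

lemma nehari_JOmega_subset: "nehari JO HO \<subseteq> nehari (JL l) (HL l)"
  unfolding nehari_def using dirderiv_JOmega_iff_Jlam HOmega_subset_Hlam by blast

lemma JOmega_nehari_nonneg:
  assumes "q \<in> nehari JO HO"
  shows "0 \<le> JO q"
proof -
  have "q \<in> HO" "q \<in> nehari (JL 1) (HL 1)" using assms nehari_JOmega_subset by (auto simp: nehari_def)
  then show ?thesis
    using Jlam_eq_JOmega nehari_Jlam_energy \<kappa>_pos IQ_nonneg[of 1 q] by (metis mult_nonneg_nonneg less_imp_le zero_le_one)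
qed

text \<open>The Nehari element is the indicator pair of a common zero, scaled so that the
  quadratic and the nonlinear term agree.\<close>
lemma nehari_JOmega_nonempty:
  assumes "Oa \<inter> Ob \<noteq> {}"
  shows "nehari JO HO \<noteq> {}"
proof -
  obtain z where z: "a z = 0" "b z = 0" using assms by auto
  define e :: "'v fpair" where "e = (\<lambda>y. if y = z then 1 else 0, \<lambda>y. if y = z then 1 else 0)"
  have e: "e \<in> HO" "e \<noteq> (\<lambda>_. 0, \<lambda>_. 0)" using z by (auto simp: e_def HOmega_def W0_def fun_eq_iff)
  have IQ_e: "0 < IQ 1 e" by (rule IQ_pos[OF HOmega_subset_Hlam[OF e(1)] _ e(2)]) simp
  have "IN e = (\<Sum>x\<in>{z}. \<mu> x * ndens e x)"
    unfolding IN_def by (rule integ_finite_support) (auto simp: ndens_def e_def)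
  then have IN_e: "0 < IN e" using \<mu>_pos by (simp add: ndens_def e_def)
  define r where "r = IQ 1 e / IN e"
  define c where "c = r powr (1 / (\<alpha> + \<beta> - 2))"
  have r: "0 < r" using IQ_e IN_e by (simp add: r_def)
  then have c: "0 < c" by (simp add: c_def)
  have "c powr (\<alpha> + \<beta>) = c powr 2 * c powr (\<alpha> + \<beta> - 2)"
    by (simp add: powr_add[symmetric])
  also have "c powr (\<alpha> + \<beta> - 2) = r"
    using r \<alpha> \<beta> by (simp add: c_def powr_powr)
  also have "c powr 2 = c\<^sup>2" using c by (simp add: powr_numeral)
  finally have "IQ 1 (pair_scale c e) - IN (pair_scale c e) = 0"
    using c IN_e by (simp add: IQ_pair_scale IN_pair_scale r_def)
  then have "dirderiv (JL 1) (pair_scale c e) (pair_scale c e) 0"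
    using dirderiv_Jlam_self by metis
  moreover have ce: "pair_scale c e \<in> HO" using e(1) by (auto simp: pair_scale_def HOmega_def W0_def)
  moreover have "pair_scale c e \<noteq> (\<lambda>_. 0, \<lambda>_. 0)" using c by (auto simp: pair_scale_def e_def fun_eq_iff)
  ultimately have "pair_scale c e \<in> nehari JO HO"
    using dirderiv_JOmega_iff_Jlam[OF ce ce] by (simp add: nehari_def)
  then show ?thesis by blast
qed

section \<open>Derivatives in directions of \<open>H\<^sub>\<Omega>\<close>\<close>

definition ndens_deriv :: "'v fpair \<Rightarrow> 'v fpair \<Rightarrow> 'v \<Rightarrow> real" where
  "ndens_deriv f q x =
     \<alpha> * signed_powr (\<alpha> - 1) (fst f x) * fst q x * \<bar>snd f x\<bar> powr \<beta>
     + \<beta> * \<bar>fst f x\<bar> powr \<alpha> * signed_powr (\<beta> - 1) (snd f x) * snd q x"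

definition dJ :: "'v fpair \<Rightarrow> 'v fpair \<Rightarrow> real" where
  "dJ f q = (\<Sum>x\<in>T. \<mu> x * hform f q x) - (\<Sum>x\<in>T. \<mu> x * ndens_deriv f q x) / (\<alpha> + \<beta>)"

lemma ndens_pair_line_deriv:
  "((\<lambda>t. ndens (pair_line f q t) x) has_real_derivative ndens_deriv f q x) (at 0)"
proof -
  have line: "((\<lambda>t. c + t * d) has_real_derivative d) (at 0)" for c d :: real
    by (auto intro!: derivative_eq_intros)
  have "((\<lambda>t. \<bar>c + t * d\<bar> powr s) has_real_derivative s * signed_powr (s - 1) c * d) (at 0)"
    if "1 < s" for c d s :: real
    using DERIV_chain2[OF has_real_derivative_abs_powr[OF that, of "c + 0 * d"] line] by simp
  from DERIV_mult[OF this[OF \<alpha>, of "fst f x" "fst q x"] this[OF \<beta>, of "snd f x" "snd q x"]]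
  show ?thesis
    by (simp add: ndens_def ndens_deriv_def pair_line_def algebra_simps)
qed

lemma dirderiv_Jlam_HOmega:
  assumes q: "q \<in> HO" and f: "integrable_V \<mu> (qdens l f)" "integrable_V \<mu> (ndens f)"
  shows "dirderiv (JL l) f q (dJ f q)"
proof -
  define Q where "Q t = (\<Sum>x\<in>T. \<mu> x * (2 * t * hform f q x + t\<^sup>2 * hdens q x))" for t
  define N where "N t = (\<Sum>x\<in>T. \<mu> x * (ndens (pair_line f q t) x - ndens f x))" for t
  have vanish: "2 * t * hform f q x + t\<^sup>2 * hdens q x = 0" "ndens (pair_line f q t) x - ndens f x = 0"
    if "x \<notin> T" for x t
    using that HOmega_vanish_outside_T[OF q]
    by (simp_all add: hform_vanish_outside_T[OF q] hdens_vanish_outside_T[OF q] pair_line_def ndens_def)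
  have "IQ l (pair_line f q t) = IQ l f + Q t" for t
  proof -
    have "qdens l (pair_line f q t) = (\<lambda>x. qdens l f x + (2 * t * hform f q x + t\<^sup>2 * hdens q x))"
      by (simp add: fun_eq_iff qdens_pair_line_HOmega[OF q] add.assoc)
    then show ?thesis
      using integ_add[OF f(1) integrable_V_finite_support[OF finite_T]]
        integ_finite_support[OF finite_T] vanish(1) by (simp add: IQ_def Q_def)
  qed
  moreover have "IN (pair_line f q t) = IN f + N t" for t
    using integ_add[OF f(2) integrable_V_finite_support[OF finite_T],
        of "\<lambda>x. ndens (pair_line f q t) x - ndens f x"]
      integ_finite_support[OF finite_T] vanish(2) by (simp add: IN_def N_def)
  ultimately have "JL l (pair_line f q t) = JL l f + (Q t / 2 - N t / (\<alpha> + \<beta>))" for t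
    by (simp add: Jlam_eq diff_divide_distrib add_divide_distrib)
  moreover have "(Q has_real_derivative (\<Sum>x\<in>T. \<mu> x * (2 * hform f q x))) (at 0)"
    unfolding Q_def by (intro DERIV_sum DERIV_cmult) (auto intro!: derivative_eq_intros)
  moreover have "(N has_real_derivative (\<Sum>x\<in>T. \<mu> x * ndens_deriv f q x)) (at 0)"
    unfolding N_def by (intro DERIV_sum DERIV_cmult DERIV_diff[where E=0, simplified] ndens_pair_line_deriv DERIV_const)
  ultimately show ?thesis
    unfolding dirderiv_iff_pair_line dJ_def using \<alpha> \<beta>
    by (auto intro!: derivative_eq_intros simp: sum_distrib_left[symmetric] mult.left_commute[of _ 2])
qed

lemma hform_tendsto:
  assumes "\<And>x. (\<lambda>n. fst (F n) x) \<longlonglongrightarrow> fst f x" "\<And>x. (\<lambda>n. snd (F n) x) \<longlonglongrightarrow> snd f x"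
  shows "(\<lambda>n. hform (F n) g x) \<longlonglongrightarrow> hform f g x"
  unfolding hform_def Gam_def by (intro tendsto_intros assms)

lemma dJ_tendsto:
  assumes "\<And>x. (\<lambda>n. fst (F n) x) \<longlonglongrightarrow> fst f x" "\<And>x. (\<lambda>n. snd (F n) x) \<longlonglongrightarrow> snd f x"
  shows "(\<lambda>n. dJ (F n) q) \<longlonglongrightarrow> dJ f q"
  unfolding dJ_def hform_def ndens_deriv_def Gam_def
  using \<alpha> \<beta> by (intro tendsto_intros assms) auto

end

section \<open>Ground states for large \<open>\<lambda>\<close>\<close>

locale steep_well_ground_states = steep_well w \<mu> a b \<alpha> \<beta>
  for w :: "'v \<Rightarrow> 'v \<Rightarrow> real" and \<mu> a b \<alpha> \<beta> +
  fixes uv :: "real \<Rightarrow> 'v fpair"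
  assumes zero_sets_meet: "{x. a x = 0} \<inter> {x. b x = 0} \<noteq> {}"
    and ground_states: "\<forall>l>0. ground_state (Jlam w \<mu> \<alpha> \<beta> a b l) (Hlam w \<mu> a b l) (uv l)"
begin

lemma uv_nehari: "0 < l \<Longrightarrow> uv l \<in> nehari (JL l) (HL l)"
  using ground_states by (simp add: ground_state_def)

lemma uv_Hlam: "0 < l \<Longrightarrow> uv l \<in> HL l"
  using uv_nehari by (simp add: nehari_def)

lemma IQ_ground_state_le:
  assumes l: "0 < l" and q: "q \<in> nehari JO HO"
  shows "IQ l (uv l) \<le> JO q / \<kappa>"
proof -
  have "\<kappa> * IQ l (uv l) = JL l (uv l)" by (simp add: nehari_Jlam_energy[OF uv_nehari[OF l]])
  also have "\<dots> \<le> JL l q"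
    using ground_states l nehari_JOmega_subset q by (intro ground_state_Jlam_le) auto
  also have "\<dots> = JO q" using q by (simp add: nehari_def Jlam_eq_JOmega)
  finally show ?thesis using \<kappa>_pos by (simp add: field_simps)
qed

text \<open>A uniform pointwise bound for the ground states: \<open>\<kappa> IQ\<close> of a ground state is at most
  \<open>J\<^sub>\<Omega>\<close> of any element of \<open>\<N>\<^sub>\<Omega>\<close>, and \<open>\<mu> \<ge> \<mu>\<^sub>m\<^sub>i\<^sub>n\<close>.\<close>
definition C :: real where
  "C = JO (SOME q. q \<in> nehari JO HO) / \<kappa> / (SOME m. 0 < m \<and> (\<forall>x. m \<le> \<mu> x))"

lemma ground_state_pointwise_bound:
  assumes "0 < l"
  shows "(fst (uv l) x)\<^sup>2 + (snd (uv l) x)\<^sup>2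
    + l * a x * (fst (uv l) x)\<^sup>2 + l * b x * (snd (uv l) x)\<^sup>2 \<le> C"
proof -
  define m where "m = (SOME m. 0 < m \<and> (\<forall>x. m \<le> \<mu> x))"
  define q where "q = (SOME q. q \<in> nehari JO HO)"
  have m: "0 < m" "m \<le> \<mu> x" unfolding m_def using someI_ex[OF \<mu>_lower_bound] by auto
  have q: "q \<in> nehari JO HO" unfolding q_def using nehari_JOmega_nonempty[OF zero_sets_meet] by (simp add: some_in_eq)
  have "m * qdens l (uv l) x \<le> \<mu> x * qdens l (uv l) x"
    using m qdens_nonneg assms by (intro mult_right_mono) auto
  also have "\<dots> \<le> IQ l (uv l)" using qdens_le_IQ uv_Hlam assms by simp
  also have "\<dots> \<le> JO q / \<kappa>" by (rule IQ_ground_state_le[OF assms q])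
  finally have "qdens l (uv l) x \<le> C" using m \<kappa>_pos by (simp add: C_def m_def q_def field_simps)
  then show ?thesis
    using hdens_ge_squares[of "uv l" x] by (simp add: qdens_def algebra_simps)
qed

lemma ground_state_norm_bound:
  assumes "0 < l"
  shows "norm (fst (uv l) x, snd (uv l) x) \<le> sqrt C"
proof -
  have "0 \<le> l * a x * (fst (uv l) x)\<^sup>2" "0 \<le> l * b x * (snd (uv l) x)\<^sup>2"
    using assms a_nonneg b_nonneg by simp_all
  then have "(fst (uv l) x)\<^sup>2 + (snd (uv l) x)\<^sup>2 \<le> C"
    using ground_state_pointwise_bound[OF assms, of x] by linarith
  then show ?thesis by (simp add: norm_Pair real_sqrt_le_mono)
qed

lemma ground_state_weighted_bound:
  assumes "0 < l"
  shows "l * a x * (fst (uv l) x)\<^sup>2 \<le> C" and "l * b x * (snd (uv l) x)\<^sup>2 \<le> C"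
proof -
  have "0 \<le> l * a x * (fst (uv l) x)\<^sup>2" "0 \<le> l * b x * (snd (uv l) x)\<^sup>2"
    using assms a_nonneg b_nonneg by simp_all
  then show "l * a x * (fst (uv l) x)\<^sup>2 \<le> C" and "l * b x * (snd (uv l) x)\<^sup>2 \<le> C"
    using ground_state_pointwise_bound[OF assms, of x] zero_le_power2[of "fst (uv l) x"]
      zero_le_power2[of "snd (uv l) x"] by linarith+
qed

lemma ground_states_vanish_off_zero_sets:
  assumes L: "filterlim L at_top sequentially" and pos: "\<And>n. 0 < L n"
  shows "a x \<noteq> 0 \<Longrightarrow> (\<lambda>n. fst (uv (L n)) x) \<longlonglongrightarrow> 0"
    and "b x \<noteq> 0 \<Longrightarrow> (\<lambda>n. snd (uv (L n)) x) \<longlonglongrightarrow> 0"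
  using a_nonneg b_nonneg
  by (auto intro!: LIMSEQ_zero_if_weighted_square_bounded[OF _ L pos] ground_state_weighted_bound[OF pos]
      simp: order_less_le)

lemma ground_states_pointwise_subseq:
  assumes L: "filterlim L at_top sequentially"
  shows "\<exists>r p. strict_mono r \<and> (\<forall>n. 0 < L (r n)) \<and> p \<in> HO \<and>
    (\<forall>x. (\<lambda>n. fst (uv (L (r n))) x) \<longlonglongrightarrow> fst p x) \<and>
    (\<forall>x. (\<lambda>n. snd (uv (L (r n))) x) \<longlonglongrightarrow> snd p x)"
proof -
  obtain N where N: "\<And>n. N \<le> n \<Longrightarrow> 1 \<le> L n"
    using L by (auto simp: filterlim_at_top eventually_sequentially)
  define P where "P n x = (fst (uv (L (n + N))) x, snd (uv (L (n + N))) x)" for n x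
  have bounded: "bounded (range (\<lambda>n. P n x))" for x
  proof (rule boundedI)
    fix y assume "y \<in> range (\<lambda>n. P n x)"
    then obtain n where "y = P n x" by blast
    moreover have "0 < L (n + N)" using N[of "n + N"] by simp
    ultimately show "norm y \<le> sqrt C" using ground_state_norm_bound by (simp add: P_def)
  qed
  have "\<exists>r. strict_mono r \<and> (\<forall>x\<in>Oa \<union> Ob. \<exists>l. (\<lambda>n. P (r n) x) \<longlonglongrightarrow> l)"
    by (rule finite_bounded_convergent_subseq) (use finite_Oa finite_Ob bounded in simp_all)
  then obtain r' where r': "strict_mono r'" "\<forall>x\<in>Oa \<union> Ob. \<exists>l. (\<lambda>n. P (r' n) x) \<longlonglongrightarrow> l"
    by blast
  from bchoice[OF r'(2)] obtain g where g: "\<forall>x\<in>Oa \<union> Ob. (\<lambda>n. P (r' n) x) \<longlonglongrightarrow> g x"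
    by blast
  define r where "r n = r' n + N" for n
  define p :: "'v fpair" where
    "p = (\<lambda>x. if a x = 0 then fst (g x) else 0, \<lambda>x. if b x = 0 then snd (g x) else 0)"
  have r: "strict_mono r" using r'(1) by (simp add: r_def strict_mono_def)
  have pos: "0 < L (r n)" for n using N[of "r n"] by (simp add: r_def)
  have Lr: "filterlim (\<lambda>n. L (r n)) at_top sequentially"
    using filterlim_compose[OF L filterlim_subseq[OF r]] .
  have fst_lim: "(\<lambda>n. fst (uv (L (r n))) x) \<longlonglongrightarrow> fst p x" for x
  proof (cases "a x = 0")
    case True
    then have "(\<lambda>n. fst (P (r' n) x)) \<longlonglongrightarrow> fst (g x)" using g by (intro tendsto_fst) simp
    then show ?thesis using True by (simp add: p_def P_def r_def)
  next
    case False
    then show ?thesis using ground_states_vanish_off_zero_sets(1)[OF Lr pos] by (simp add: p_def)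
  qed
  have snd_lim: "(\<lambda>n. snd (uv (L (r n))) x) \<longlonglongrightarrow> snd p x" for x
  proof (cases "b x = 0")
    case True
    then have "(\<lambda>n. snd (P (r' n) x)) \<longlonglongrightarrow> snd (g x)" using g by (intro tendsto_snd) simp
    then show ?thesis using True by (simp add: p_def P_def r_def)
  next
    case False
    then show ?thesis using ground_states_vanish_off_zero_sets(2)[OF Lr pos] by (simp add: p_def)
  qed
  have "p \<in> HO" by (simp add: p_def HOmega_def W0_def)
  then show ?thesis using r pos fst_lim snd_lim by (intro exI[of _ r] exI[of _ p]) simp
qed

text \<open>Derivatives in directions of \<open>H\<^sub>\<Omega>\<close> are finite sums, so criticality passes to
  pointwise limits.\<close>
lemma pointwise_limit_critical:
  assumes pos: "\<And>n. 0 < L n" and p: "p \<in> HO"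
    and lim: "\<And>x. (\<lambda>n. fst (uv (L n)) x) \<longlonglongrightarrow> fst p x" "\<And>x. (\<lambda>n. snd (uv (L n)) x) \<longlonglongrightarrow> snd p x"
  shows "critical_on JO HO p"
  unfolding critical_on_def
proof (intro conjI ballI p)
  fix q assume q: "q \<in> HO"
  have "dJ (uv (L n)) q = 0" for n
  proof -
    have "critical_on (JL (L n)) (HL (L n)) (uv (L n))"
      using ground_states pos by (simp add: ground_state_def)
    then have "dirderiv (JL (L n)) (uv (L n)) q 0"
      using HOmega_subset_Hlam[OF q] by (simp add: critical_on_def)
    moreover have "dirderiv (JL (L n)) (uv (L n)) q (dJ (uv (L n)) q)"
      by (rule dirderiv_Jlam_HOmega[OF q integrable_qdens[OF uv_Hlam[OF pos]]
            nehari_Jlam_integrable_ndens[OF less_imp_le[OF pos] uv_nehari[OF pos]]])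
    ultimately show ?thesis by (rule dirderiv_unique[symmetric])
  qed
  with dJ_tendsto[OF lim, of q] have "dJ p q = 0" by (simp add: LIMSEQ_const_iff)
  moreover have "integrable_V \<mu> (ndens p)"
    by (rule integrable_V_finite_support[OF finite_T])
      (use ndens_vanish_outside_zero_sets[OF p] zero_sets_subset_T in blast)
  then have "dirderiv (JL 1) p q (dJ p q)"
    by (rule dirderiv_Jlam_HOmega[OF q integrable_qdens[OF HOmega_subset_Hlam[OF p]]])
  ultimately show "dirderiv JO p q 0" using dirderiv_JOmega_iff_Jlam[OF p q] by simp
qed

text \<open>For large \<open>l\<close> the weighted bound \<open>l a u\<^sup>2 \<le> C\<close> forces the points where a component
  exceeds \<open>1/2\<close> into the zero sets, because \<open>a\<close> and \<open>b\<close> do not take values in \<open>(0, \<delta>)\<close>.\<close>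
lemma ground_state_mass_on_zero_sets:
  assumes l: "0 < l" and \<delta>: "0 < \<delta>" "\<forall>x. (a x < \<delta> \<longrightarrow> a x = 0) \<and> (b x < \<delta> \<longrightarrow> b x = 0)"
    and large: "4 * C < l * \<delta>"
  shows "1/4 \<le> (\<Sum>x\<in>Oa. (fst (uv l) x)\<^sup>2) + (\<Sum>x\<in>Ob. (snd (uv l) x)\<^sup>2)"
proof -
  have quarter: "1/4 < y\<^sup>2" if "1/2 < \<bar>y\<bar>" for y :: real
  proof -
    have "(1/2)\<^sup>2 < \<bar>y\<bar>\<^sup>2" by (rule power_strict_mono) (use that in auto)
    then show ?thesis by (simp add: power2_eq_square)
  qed
  have vanish: "c = 0" if "0 \<le> c" "c < \<delta> \<longrightarrow> c = 0" "1/2 < \<bar>y\<bar>" "l * c * y\<^sup>2 \<le> C" for c y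
  proof (rule ccontr)
    assume "c \<noteq> 0"
    then have "\<delta> \<le> c" using that(2) by linarith
    then have "l * \<delta> * (1/4) \<le> l * c * y\<^sup>2"
      using l \<delta>(1) quarter[OF that(3)] by (intro mult_mono) auto
    then show False using that(4) large by linarith
  qed
  obtain x where x: "1/2 < \<bar>fst (uv l) x\<bar> \<or> 1/2 < \<bar>snd (uv l) x\<bar>"
    using nehari_Jlam_large_component[OF less_imp_le[OF l] uv_nehari[OF l]] by blast
  have sums: "0 \<le> (\<Sum>x\<in>Oa. (fst (uv l) x)\<^sup>2)" "0 \<le> (\<Sum>x\<in>Ob. (snd (uv l) x)\<^sup>2)"
    by (simp_all add: sum_nonneg)
  from x show ?thesis
  proof
    assume h: "1/2 < \<bar>fst (uv l) x\<bar>"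
    then have "a x = 0"
      using vanish[OF _ _ h ground_state_weighted_bound(1)[OF l]] a_nonneg \<delta>(2) by blast
    then have "(fst (uv l) x)\<^sup>2 \<le> (\<Sum>x\<in>Oa. (fst (uv l) x)\<^sup>2)"
      using finite_Oa by (intro member_le_sum) auto
    then show ?thesis using quarter[OF h] sums by linarith
  next
    assume h: "1/2 < \<bar>snd (uv l) x\<bar>"
    then have "b x = 0"
      using vanish[OF _ _ h ground_state_weighted_bound(2)[OF l]] b_nonneg \<delta>(2) by blast
    then have "(snd (uv l) x)\<^sup>2 \<le> (\<Sum>x\<in>Ob. (snd (uv l) x)\<^sup>2)"
      using finite_Ob by (intro member_le_sum) auto
    then show ?thesis using quarter[OF h] sums by linarith
  qed
qed

lemma pointwise_limit_nonzero:
  assumes \<delta>: "0 < \<delta>" "\<forall>x. (a x < \<delta> \<longrightarrow> a x = 0) \<and> (b x < \<delta> \<longrightarrow> b x = 0)"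
    and L: "filterlim L at_top sequentially" and pos: "\<And>n. 0 < L n"
    and lim: "\<And>x. (\<lambda>n. fst (uv (L n)) x) \<longlonglongrightarrow> fst p x" "\<And>x. (\<lambda>n. snd (uv (L n)) x) \<longlonglongrightarrow> snd p x"
  shows "p \<noteq> (\<lambda>_. 0, \<lambda>_. 0)"
proof
  assume p: "p = (\<lambda>_. 0, \<lambda>_. 0)"
  have "\<forall>\<^sub>F n in sequentially. 4 * C / \<delta> + 1 \<le> L n"
    using L by (simp add: filterlim_at_top)
  then have "\<forall>\<^sub>F n in sequentially. 1/4 \<le> (\<Sum>x\<in>Oa. (fst (uv (L n)) x)\<^sup>2) + (\<Sum>x\<in>Ob. (snd (uv (L n)) x)\<^sup>2)"
  proof eventually_elim
    case (elim n)
    then have "4 * C < L n * \<delta>" using \<delta>(1) by (simp add: field_simps)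
    then show ?case by (rule ground_state_mass_on_zero_sets[OF pos \<delta>])
  qed
  moreover have "(\<lambda>n. (\<Sum>x\<in>Oa. (fst (uv (L n)) x)\<^sup>2) + (\<Sum>x\<in>Ob. (snd (uv (L n)) x)\<^sup>2))
      \<longlonglongrightarrow> (\<Sum>x\<in>Oa. (fst p x)\<^sup>2) + (\<Sum>x\<in>Ob. (snd p x)\<^sup>2)"
    by (intro tendsto_intros lim)
  ultimately have "1/4 \<le> (\<Sum>x\<in>Oa. (fst p x)\<^sup>2) + (\<Sum>x\<in>Ob. (snd p x)\<^sup>2)"
    by (intro tendsto_lowerbound) auto
  then show False using p by simp
qed

text \<open>Expanding \<open>\<parallel>u\<^sub>n - p\<parallel>\<^sup>2\<close> and bounding \<open>\<parallel>u\<^sub>n\<parallel>\<^sup>2\<close> by \<open>J\<^sub>\<Omega>(q)/\<kappa>\<close> shows that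
  \<open>\<parallel>u\<^sub>n - p\<parallel>\<^sup>2\<close> is eventually below \<open>(J\<^sub>\<Omega>(q) - J\<^sub>\<Omega>(p))/\<kappa>\<close> up to a null sequence;
  \<open>q = p\<close> gives strong convergence, and nonnegativity gives minimality.\<close>
lemma pointwise_limit_ground_state:
  assumes pos: "\<And>n. 0 < L n" and p: "p \<in> nehari JO HO"
    and lim: "\<And>x. (\<lambda>n. fst (uv (L n)) x) \<longlonglongrightarrow> fst p x" "\<And>x. (\<lambda>n. snd (uv (L n)) x) \<longlonglongrightarrow> snd p x"
  shows "(\<lambda>n. normH w \<mu> (\<lambda>x. fst (uv (L n)) x - fst p x, \<lambda>x. snd (uv (L n)) x - snd p x)) \<longlonglongrightarrow> 0"
    and "JO p = (INF q\<in>nehari JO HO. JO q)"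
proof -
  have pHO: "p \<in> HO" using p by (simp add: nehari_def)
  define Y where "Y n = integ \<mu> (hdens (pair_line (uv (L n)) p (-1)))" for n
  define c where "c n = (\<Sum>x\<in>T. \<mu> x * (hdens p x - 2 * hform (uv (L n)) p x))" for n
  have Y_nonneg: "0 \<le> Y n" for n
    unfolding Y_def using \<mu>_pos hdens_nonneg by (intro integ_nonneg) (auto intro: less_imp_le)
  have Y_le: "Y n \<le> JO q / \<kappa> + c n" if q: "q \<in> nehari JO HO" for n q
  proof -
    have "uv (L n) \<in> Hspace w \<mu>" using uv_Hlam[OF pos] by (simp add: Hlam_def)
    then have "Y n = integ \<mu> (hdens (uv (L n))) + c n"
      unfolding Y_def c_def by (rule integ_hdens_diff_HOmega[OF _ pHO])
    also have "integ \<mu> (hdens (uv (L n))) \<le> IQ (L n) (uv (L n))"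
      using integ_hdens_le_IQ uv_Hlam pos less_imp_le by blast
    also have "\<dots> \<le> JO q / \<kappa>" by (rule IQ_ground_state_le[OF pos q])
    finally show ?thesis by simp
  qed
  have "c \<longlonglongrightarrow> (\<Sum>x\<in>T. \<mu> x * (hdens p x - 2 * hform p p x))"
    unfolding c_def by (intro tendsto_intros hform_tendsto lim)
  also have "(\<Sum>x\<in>T. \<mu> x * (hdens p x - 2 * hform p p x)) = - IQ 1 p"
    by (simp add: hform_self IQ_HOmega[OF pHO] sum_negf[symmetric])
  also have "IQ 1 p = JO p / \<kappa>"
    using nehari_Jlam_energy[OF nehari_JOmega_subset[THEN subsetD, OF p]] Jlam_eq_JOmega[OF pHO] \<kappa>_pos
    by (simp add: field_simps)
  finally have c_lim: "c \<longlonglongrightarrow> - (JO p / \<kappa>)" .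
  have minimal: "JO p \<le> JO q" if q: "q \<in> nehari JO HO" for q
  proof -
    have "(\<lambda>n. JO q / \<kappa> + c n) \<longlonglongrightarrow> JO q / \<kappa> - JO p / \<kappa>"
      using tendsto_add[OF tendsto_const c_lim] by simp
    moreover have "0 \<le> JO q / \<kappa> + c n" for n using Y_nonneg[of n] Y_le[OF q, of n] by linarith
    ultimately have "0 \<le> JO q / \<kappa> - JO p / \<kappa>" by (intro tendsto_lowerbound) auto
    then show ?thesis using \<kappa>_pos by (simp add: field_simps)
  qed
  have "Y \<longlonglongrightarrow> 0"
  proof (rule tendsto_sandwich[of "\<lambda>_. 0" _ _ "\<lambda>n. JO p / \<kappa> + c n"])
    show "(\<lambda>n. JO p / \<kappa> + c n) \<longlonglongrightarrow> 0"
      using tendsto_add[OF tendsto_const c_lim, of "JO p / \<kappa>"] by simp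
  qed (use Y_nonneg Y_le[OF p] in auto)
  then have "(\<lambda>n. sqrt (Y n)) \<longlonglongrightarrow> sqrt 0" by (rule tendsto_real_sqrt)
  then show "(\<lambda>n. normH w \<mu> (\<lambda>x. fst (uv (L n)) x - fst p x, \<lambda>x. snd (uv (L n)) x - snd p x)) \<longlonglongrightarrow> 0"
    by (simp add: Y_def normH_eq pair_line_def)
  have "bdd_below (JO ` nehari JO HO)"
    using JOmega_nehari_nonneg by (intro bdd_belowI[of _ 0]) auto
  then show "JO p = (INF q\<in>nehari JO HO. JO q)"
    using p minimal by (intro antisym cINF_greatest cINF_lower) auto
qed

end

theorem theorem1p3:
  fixes w :: "'v \<Rightarrow> 'v \<Rightarrow> real" and \<mu> :: "'v \<Rightarrow> real"
    and a b :: "'v \<Rightarrow> real" and \<alpha> \<beta> :: real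
    and uv :: "real \<Rightarrow> 'v fpair" and lam :: "nat \<Rightarrow> real"
  assumes G: "graph_setting w \<mu>"
    and \<alpha>: "\<alpha> > 1" and \<beta>: "\<beta> > 1"
    and a_nonneg: "\<forall>x. 0 \<le> a x" and b_nonneg: "\<forall>x. 0 \<le> b x"
    and A1a: "{x. a x = 0} \<noteq> {}" "gbounded w {x. a x = 0}"
    and A1b: "{x. b x = 0} \<noteq> {}" "gbounded w {x. b x = 0}"
    and A1ab: "{x. a x = 0} \<inter> {x. b x = 0} \<noteq> {}"
              "gbounded w ({x. a x = 0} \<inter> {x. b x = 0})"
    and A2: "\<exists>x0. \<forall>M. \<exists>R. \<forall>x. gdist w x0 x \<ge> R \<longrightarrow> a x \<ge> M \<and> b x \<ge> M"
    and GS: "\<forall>l>0. ground_state (Jlam w \<mu> \<alpha> \<beta> a b l) (Hlam w \<mu> a b l) (uv l)"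
    and lam: "filterlim lam at_top sequentially"
  shows "\<exists>r u v. strict_mono r \<and> (u, v) \<in> Hspace w \<mu> \<and>
           (\<lambda>n. normH w \<mu> (\<lambda>x. fst (uv (lam (r n))) x - u x,
                             \<lambda>x. snd (uv (lam (r n))) x - v x)) \<longlonglongrightarrow> 0 \<and>
           (\<forall>x. a x \<noteq> 0 \<longrightarrow> u x = 0) \<and> (\<forall>x. b x \<noteq> 0 \<longrightarrow> v x = 0) \<and>
           (u, v) \<in> HOmega {x. a x = 0} {x. b x = 0} \<and>
           ground_state (JOmega w \<mu> \<alpha> \<beta> {x. a x = 0} {x. b x = 0})
                        (HOmega {x. a x = 0} {x. b x = 0}) (u, v)"
proof -
  interpret steep_well_ground_states w \<mu> a b \<alpha> \<beta> uv
    using G \<alpha> \<beta> a_nonneg b_nonneg gbounded_imp_finite[OF G] A1a(2) A1b(2) A1ab(1) GS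
    by unfold_locales auto
  obtain \<delta> where \<delta>: "0 < \<delta>" "\<forall>x. (a x < \<delta> \<longrightarrow> a x = 0) \<and> (b x < \<delta> \<longrightarrow> b x = 0)"
    using gap_of_coercive[OF A2] by blast
  obtain r p where r: "strict_mono r" and pos: "\<And>n. 0 < lam (r n)" and pHO: "p \<in> HO"
    and lim: "\<And>x. (\<lambda>n. fst (uv (lam (r n))) x) \<longlonglongrightarrow> fst p x" "\<And>x. (\<lambda>n. snd (uv (lam (r n))) x) \<longlonglongrightarrow> snd p x"
    using ground_states_pointwise_subseq[OF lam] by blast
  have lam_r: "filterlim (\<lambda>n. lam (r n)) at_top sequentially"
    using filterlim_compose[OF lam filterlim_subseq[OF r]] .
  have crit: "critical_on JO HO p" by (rule pointwise_limit_critical[OF pos pHO lim])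
  moreover have "p \<noteq> (\<lambda>_. 0, \<lambda>_. 0)" by (rule pointwise_limit_nonzero[OF \<delta> lam_r pos lim])
  ultimately have p: "p \<in> nehari JO HO" by (simp add: critical_on_def nehari_def)
  note limit = pointwise_limit_ground_state[OF pos p lim]
  show ?thesis
  proof (intro exI conjI)
    show "(fst p, snd p) \<in> Hspace w \<mu>" using HOmega_subset_Hlam[OF pHO, of 1] by (simp add: Hlam_def)
    show "ground_state JO HO (fst p, snd p)"
      using limit(2) p crit by (simp add: ground_state_def)
  qed (use r limit(1) pHO in \<open>auto simp: HOmega_def W0_def\<close>)
qed

end
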